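(* Let $\phi$ be a monotone Boolean formula in the variables $x_1,\dots,x_n$ defining a set $S \subseteq \{0,1\}^n$, and let $Q \subseteq [0,1]^n$ be any convex set containing $S$. If $Q$ satisfies all monotone inequalities of pitch at most $p$ that are valid for $S$, then $\phi(Q)$ satisfies all monotone inequalities of pitch at most $p+1$ that are valid for $S$. Moreover, if $Q$ is a polytope defined by an extended formulation of size $\sigma$, then $\phi(Q)$ is a polytope that can be defined by an extended formulation of size $|\phi|\sigma$.
   Context: Boolean formulas are built from input variables $x_1,\dots,x_n$ using $\wedge$, $\vee$, $\neg$, and interpreted as functions $\{0,1\}^n\to\{0,1\}$; $\phi$ defines $S=\{x\in\{0,1\}^n:\phi(x)=1\}$. A formula is monotone if it contains no negations. The size $|\phi|$ is the total number of occurrences of input variables. For such $\phi$ and a convex $Q\subseteq[0,1]^n$, $\phi(Q)$ is defined recursively: a variable $x_i$ is replaced by $\{x \in Q : x_i = 1\}$ (a negated $\neg x_i$, if present, by $\{x\in Q: x_i=0\}$); a conjunction by the intersection of the corresponding sets; a disjunction by the convex hull of the union of the corresponding sets. A monotone inequality in standard form is $\sum_{i \in I^+} c_i x_i \ge \delta$ with $I^+\subseteq[n]$, $c_i \ge 0$, $\delta \ge 0$. Its pitch is the smallest number $p$ such that $\sum_{j\in J} c_j \ge \delta$ for every $J \subseteq \operatorname{supp}(c)$ with $|J|\ge p$. An extended formulation of size $m$ of a polytope $P\subseteq\mathbb{R}^n$ is a description $P=\{x:\exists y\in\mathbb{R}^d,\ Ay\ge b,\ x=Ty+t\}$ with $A$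 having $m$ rows. *)

theory Defs
  imports "HOL-Analysis.Analysis"
begin

datatype 'v mformula = MVar 'v | MAnd "'v mformula" "'v mformula" | MOr "'v mformula" "'v mformula"

fun meval :: "'v mformula \<Rightarrow> ('v \<Rightarrow> bool) \<Rightarrow> bool" where
  "meval (MVar i) a = a i"
| "meval (MAnd f g) a = (meval f a \<and> meval g a)"
| "meval (MOr f g) a = (meval f a \<or> meval g a)"

fun msize :: "'v mformula \<Rightarrow> nat" where
  "msize (MVar i) = 1"
| "msize (MAnd f g) = msize f + msize g"
| "msize (MOr f g) = msize f + msize g"

definition defined_set :: "'n mformula \<Rightarrow> (real ^ 'n) set" where
  "defined_set \<phi> = {x. (\<forall>i. x $ i = 0 \<or> x $ i = 1) \<and> meval \<phi> (\<lambda>i. x $ i = 1)}"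

fun mapply :: "'n mformula \<Rightarrow> (real ^ 'n) set \<Rightarrow> (real ^ 'n) set" where
  "mapply (MVar i) Q = {x \<in> Q. x $ i = 1}"
| "mapply (MAnd f g) Q = mapply f Q \<inter> mapply g Q"
| "mapply (MOr f g) Q = convex hull (mapply f Q \<union> mapply g Q)"

definition satisfies_ineq :: "(real ^ 'n) set \<Rightarrow> ('n \<Rightarrow> real) \<Rightarrow> real \<Rightarrow> bool" where
  "satisfies_ineq A c \<delta> \<longleftrightarrow> (\<forall>x\<in>A. (\<Sum>i\<in>UNIV. c i * x $ i) \<ge> \<delta>)"

definition supp :: "('n \<Rightarrow> real) \<Rightarrow> 'n set" where
  "supp c = {i. c i \<noteq> 0}"

definition pitch :: "('n::finite \<Rightarrow> real) \<Rightarrow> real \<Rightarrow> nat" where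
  "pitch c \<delta> = (LEAST p. \<forall>J. J \<subseteq> supp c \<and> card J \<ge> p \<longrightarrow> (\<Sum>j\<in>J. c j) \<ge> \<delta>)"

definition has_ext_form :: "(real ^ 'n) set \<Rightarrow> nat \<Rightarrow> bool" where
  "has_ext_form P m \<longleftrightarrow>
     (\<exists>(d::nat) (A :: nat \<Rightarrow> nat \<Rightarrow> real) (b :: nat \<Rightarrow> real) (T :: 'n \<Rightarrow> nat \<Rightarrow> real) (t :: real ^ 'n).
        P = {x. \<exists>y :: nat \<Rightarrow> real.
                  (\<forall>r<m. (\<Sum>j<d. A r j * y j) \<ge> b r) \<and>
                  (\<forall>k. x $ k = (\<Sum>j<d. T k j * y j) + t $ k)})"

end

theory Submission
  imports Defs
begin

text \<open>
  Pitch: let \<open>c \<bullet> x \<ge> \<delta>\<close> have pitch at most \<open>p + 1\<close> and be valid for \<open>S\<close>. For \<open>i\<close> in the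
  support of \<open>c\<close>, dropping \<open>x\<^sub>i\<close> and lowering \<open>\<delta>\<close> by \<open>c\<^sub>i\<close> gives an inequality of pitch at
  most \<open>p\<close> that is still valid for \<open>S\<close> (points of \<open>S\<close> may be raised to \<open>x\<^sub>i = 1\<close> by
  monotonicity), so it holds on \<open>Q\<close> and \<open>c \<bullet> x \<ge> \<delta>\<close> holds on the face \<open>Q \<inter> {x\<^sub>i = 1}\<close>.
  By induction on \<open>\<phi>\<close>, either \<open>\<phi>\<close> is true at the 0/1 point vanishing exactly on the support
  of \<open>c\<close>, forcing \<open>\<delta> = 0\<close>, or \<open>\<phi>(Q)\<close> lies in the convex hull of these faces.

  Size: every set \<open>\<psi>(Q)\<close> contains the all-ones point and is bounded. An intersection is
  described by pooling the variables and rows of both descriptions and equating their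
  projections; the equations cost no rows since they can be eliminated by an affine
  substitution of the variables. The convex hull of a union of two such sets is given exactly
  by Balas' homogenized disjunctive formulation, with the rows of both descriptions.
\<close>

section \<open>Monotone formulas and their relaxations\<close>

lemma meval_mono: "(\<And>i. a i \<Longrightarrow> b i) \<Longrightarrow> meval f a \<Longrightarrow> meval f b"
  by (induction f) auto

lemma msize_ge_1: "1 \<le> msize f"
  by (induction f) auto

lemma vec_1_mem_defined_set: "vec 1 \<in> defined_set \<phi>"
proof -
  have "meval \<phi> (\<lambda>_. True)"
    by (induction \<phi>) auto
  then show ?thesis
    by (simp add: defined_set_def)
qed

lemma mapply_subset: "convex Q \<Longrightarrow> mapply f Q \<subseteq> Q"
  by (induction f) (auto, metis Un_least hull_minimal subsetD)

lemma vec_1_mem_mapply: "vec 1 \<in> Q \<Longrightarrow> vec 1 \<in> mapply f Q"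
  by (induction f) (auto intro: hull_inc)

lemma polytope_mapply:
  fixes Q :: "(real ^ 'n::finite) set"
  assumes "polytope Q"
  shows "polytope (mapply f Q)"
proof (induction f)
  case (MVar i)
  have "{x\<in>Q. x $ i = 1} = Q \<inter> {x. axis i 1 \<bullet> x = 1}"
    by (auto simp: inner_axis')
  then show ?case
    using polytope_Int_polyhedron[OF assms polyhedron_hyperplane] by simp
next
  case (MAnd f g)
  then show ?case
    by (simp add: polytope_Int)
next
  case (MOr f g)
  then obtain V W where "finite V" "mapply f Q = convex hull V" "finite W" "mapply g Q = convex hull W"
    unfolding polytope_def by blast
  moreover have "convex hull (convex hull V \<union> convex hull W) = convex hull (V \<union> W)"
    by (rule hull_Un[symmetric]) (simp add: convex_Inter)
  ultimately show ?case
    by (simp add: polytope_def) (metis finite_UnI)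
qed

lemma mapply_subset_hull_faces:
  "meval f (\<lambda>j. j \<notin> U) \<or> mapply f Q \<subseteq> convex hull (\<Union>i\<in>U. {x\<in>Q. x $ i = 1})"
proof (induction f)
  case (MOr f g)
  show ?case
  proof (cases "meval (MOr f g) (\<lambda>j. j \<notin> U)")
    case False
    with MOr have "mapply f Q \<union> mapply g Q \<subseteq> convex hull (\<Union>i\<in>U. {x\<in>Q. x $ i = 1})"
      by auto
    then show ?thesis
      by (simp add: hull_minimal)
  qed simp
qed (auto intro: hull_inc)

section \<open>Monotone inequalities of bounded pitch\<close>

definition satisfies_valid_ineqs :: "(real ^ 'n::finite) set \<Rightarrow> (real ^ 'n) set \<Rightarrow> nat \<Rightarrow> bool" where
  "satisfies_valid_ineqs S Q p \<longleftrightarrow>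
     (\<forall>c \<delta>. (\<forall>i. c i \<ge> 0) \<longrightarrow> \<delta> \<ge> 0 \<longrightarrow> satisfies_ineq S c \<delta>
        \<longrightarrow> pitch c \<delta> \<le> p \<longrightarrow> satisfies_ineq Q c \<delta>)"

lemma pitch_le:
  assumes "\<And>J. J \<subseteq> supp c \<Longrightarrow> card J \<ge> q \<Longrightarrow> \<delta> \<le> (\<Sum>j\<in>J. c j)"
  shows "pitch c \<delta> \<le> q"
  unfolding pitch_def using assms by (intro Least_le) blast

lemma sum_ge_if_pitch_le:
  fixes c :: "'n::finite \<Rightarrow> real"
  assumes "pitch c \<delta> \<le> q" and "J \<subseteq> supp c" and "card J \<ge> q"
  shows "\<delta> \<le> (\<Sum>j\<in>J. c j)"
proof -
  let ?P = "\<lambda>p. \<forall>J. J \<subseteq> supp c \<and> card J \<ge> p \<longrightarrow> \<delta> \<le> (\<Sum>j\<in>J. c j)"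
  \<comment> \<open>the threshold \<open>CARD('n) + 1\<close> is vacuous, so the \<open>LEAST\<close> in \<open>pitch\<close> exists\<close>
  have "?P (CARD('n) + 1)"
    using card_mono[of UNIV] by (metis Suc_eq_plus1 finite not_less_eq_eq top_greatest)
  then have "?P (pitch c \<delta>)"
    unfolding pitch_def by (rule LeastI)
  then show ?thesis
    using assms by auto
qed

lemma sum_mult_nth_split:
  fixes c :: "'n::finite \<Rightarrow> real"
  shows "(\<Sum>j\<in>UNIV. c j * x $ j) = c i * x $ i + (\<Sum>j\<in>UNIV. (c(i := 0)) j * x $ j)"
proof -
  have "(\<Sum>j\<in>UNIV. c j * x $ j) = (\<Sum>j\<in>UNIV. (c(i := 0)) j * x $ j + (if j = i then c i * x $ i else 0))"
    by (rule sum.cong) auto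
  also have "\<dots> = c i * x $ i + (\<Sum>j\<in>UNIV. (c(i := 0)) j * x $ j)"
    by (simp add: sum.distrib)
  finally show ?thesis .
qed

lemma convex_ineq_set: "convex {x :: real ^ 'n. \<delta> \<le> (\<Sum>j\<in>UNIV. c j * x $ j)}"
  using convex_halfspace_ge[of \<delta> "\<chi> j. c j"] by (simp add: inner_vec_def)

lemma satisfies_ineq_defined_set_fun_upd_zero:
  fixes c :: "'n::finite \<Rightarrow> real"
  assumes c_nonneg: "\<forall>j. c j \<ge> 0" and valid: "satisfies_ineq (defined_set \<phi>) c \<delta>"
  shows "satisfies_ineq (defined_set \<phi>) (c(i := 0)) (max 0 (\<delta> - c i))"
  unfolding satisfies_ineq_def
proof
  fix y assume y: "y \<in> defined_set \<phi>"
  define y' :: "real ^ 'n" where "y' = (\<chi> j. if j = i then 1 else y $ j)"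
  \<comment> \<open>raising a coordinate of a point of \<open>S\<close> to 1 stays in \<open>S\<close> by monotonicity\<close>
  have "y' \<in> defined_set \<phi>"
    using y unfolding defined_set_def y'_def by (auto intro: meval_mono[rotated])
  then have "\<delta> \<le> (\<Sum>j\<in>UNIV. c j * y' $ j)"
    using valid by (auto simp: satisfies_ineq_def)
  also have "\<dots> = c i + (\<Sum>j\<in>UNIV. (c(i := 0)) j * y $ j)"
    unfolding sum_mult_nth_split[of c y' i] by (simp add: y'_def, intro sum.cong) auto
  finally have "\<delta> - c i \<le> (\<Sum>j\<in>UNIV. (c(i := 0)) j * y $ j)"
    by simp
  moreover have "0 \<le> (\<Sum>j\<in>UNIV. (c(i := 0)) j * y $ j)"
  proof (intro sum_nonneg mult_nonneg_nonneg)
    fix j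
    show "0 \<le> (c(i := 0)) j"
      using c_nonneg by simp
    have "y $ j = 0 \<or> y $ j = 1"
      using y by (simp add: defined_set_def)
    then show "0 \<le> y $ j"
      by auto
  qed
  ultimately show "max 0 (\<delta> - c i) \<le> (\<Sum>j\<in>UNIV. (c(i := 0)) j * y $ j)"
    by simp
qed

lemma pitch_fun_upd_zero_le:
  fixes c :: "'n::finite \<Rightarrow> real"
  assumes c_nonneg: "\<forall>j. c j \<ge> 0" and pitch_c: "pitch c \<delta> \<le> p + 1" and i: "i \<in> supp c"
  shows "pitch (c(i := 0)) (max 0 (\<delta> - c i)) \<le> p"
proof (rule pitch_le)
  fix J assume J: "J \<subseteq> supp (c(i := 0))" "p \<le> card J"
  have "supp (c(i := 0)) = supp c - {i}"
    by (auto simp: supp_def)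
  then have "i \<notin> J" and iJ_supp: "insert i J \<subseteq> supp c"
    using J(1) i by auto
  have "p + 1 \<le> card (insert i J)"
    using J(2) \<open>i \<notin> J\<close> by (simp add: card_insert_if)
  then have "\<delta> \<le> (\<Sum>j\<in>insert i J. c j)"
    by (rule sum_ge_if_pitch_le[OF pitch_c iJ_supp])
  also have "\<dots> = c i + (\<Sum>j\<in>J. c j)"
    using \<open>i \<notin> J\<close> by simp
  also have "(\<Sum>j\<in>J. c j) = (\<Sum>j\<in>J. (c(i := 0)) j)"
    using \<open>i \<notin> J\<close> by (intro sum.cong) auto
  finally have "\<delta> - c i \<le> (\<Sum>j\<in>J. (c(i := 0)) j)"
    by simp
  moreover have "0 \<le> (\<Sum>j\<in>J. (c(i := 0)) j)"
    using c_nonneg by (simp add: sum_nonneg)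
  ultimately show "max 0 (\<delta> - c i) \<le> (\<Sum>j\<in>J. (c(i := 0)) j)"
    by simp
qed

lemma satisfies_ineq_face:
  fixes c :: "'n::finite \<Rightarrow> real"
  assumes Q: "satisfies_valid_ineqs (defined_set \<phi>) Q p"
    and c_nonneg: "\<forall>j. c j \<ge> 0" and valid: "satisfies_ineq (defined_set \<phi>) c \<delta>"
    and pitch_c: "pitch c \<delta> \<le> p + 1" and i: "i \<in> supp c"
  shows "satisfies_ineq {x\<in>Q. x $ i = 1} c \<delta>"
  unfolding satisfies_ineq_def
proof
  fix x assume x: "x \<in> {x\<in>Q. x $ i = 1}"
  have "satisfies_ineq Q (c(i := 0)) (max 0 (\<delta> - c i))"
    using Q c_nonneg satisfies_ineq_defined_set_fun_upd_zero[OF c_nonneg valid]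
      pitch_fun_upd_zero_le[OF c_nonneg pitch_c i]
    unfolding satisfies_valid_ineqs_def by simp
  then have "\<delta> - c i \<le> (\<Sum>j\<in>UNIV. (c(i := 0)) j * x $ j)"
    using x by (auto simp: satisfies_ineq_def)
  then show "\<delta> \<le> (\<Sum>j\<in>UNIV. c j * x $ j)"
    using x sum_mult_nth_split[of c x i] by simp
qed

lemma satisfies_valid_ineqs_mapply:
  fixes \<phi> :: "'n::finite mformula"
  assumes "convex Q" and Q_nonneg: "\<forall>x\<in>Q. \<forall>i. 0 \<le> x $ i"
    and Q: "satisfies_valid_ineqs (defined_set \<phi>) Q p"
  shows "satisfies_valid_ineqs (defined_set \<phi>) (mapply \<phi> Q) (p + 1)"
  unfolding satisfies_valid_ineqs_def
proof (intro allI impI)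
  fix c :: "'n \<Rightarrow> real" and \<delta> :: real
  assume c_nonneg: "\<forall>i. c i \<ge> 0" and "\<delta> \<ge> 0" and valid: "satisfies_ineq (defined_set \<phi>) c \<delta>"
    and pitch_c: "pitch c \<delta> \<le> p + 1"
  let ?H = "{x :: real ^ 'n. \<delta> \<le> (\<Sum>j\<in>UNIV. c j * x $ j)}"
  from mapply_subset_hull_faces[of \<phi> "supp c" Q]
  show "satisfies_ineq (mapply \<phi> Q) c \<delta>"
  proof
    define z :: "real ^ 'n" where "z = (\<chi> j. if j \<in> supp c then 0 else 1)"
    assume "meval \<phi> (\<lambda>j. j \<notin> supp c)"
    then have "z \<in> defined_set \<phi>"
      by (simp add: defined_set_def z_def)
    moreover have "(\<Sum>j\<in>UNIV. c j * z $ j) = 0"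
      by (rule sum.neutral) (auto simp: z_def supp_def)
    ultimately have "\<delta> \<le> 0"
      using valid by (force simp: satisfies_ineq_def)
    moreover have "0 \<le> (\<Sum>j\<in>UNIV. c j * x $ j)" if "x \<in> Q" for x
      using that Q_nonneg c_nonneg by (simp add: sum_nonneg)
    ultimately show ?thesis
      using mapply_subset[OF \<open>convex Q\<close>] by (force simp: satisfies_ineq_def)
  next
    assume "mapply \<phi> Q \<subseteq> convex hull (\<Union>i\<in>supp c. {x\<in>Q. x $ i = 1})"
    moreover have "convex hull (\<Union>i\<in>supp c. {x\<in>Q. x $ i = 1}) \<subseteq> ?H"
      using satisfies_ineq_face[OF Q c_nonneg valid pitch_c] convex_ineq_set
      by (intro hull_minimal) (auto simp: satisfies_ineq_def)
    ultimately show ?thesis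
      by (auto simp: satisfies_ineq_def)
  qed
qed

section \<open>Extended formulations\<close>

text \<open>
  The variables of an extended formulation are vectors \<open>y :: nat \<Rightarrow> real\<close>, of which a
  formulation with \<open>d\<close> variables only reads \<open>y 0, \<dots>, y (d - 1)\<close>. The rows \<open>A y \<ge> b\<close>
  and the map \<open>x = T y + t\<close> become affine functions \<open>g r\<close> (with \<open>g r y \<ge> 0\<close>) and \<open>h k\<close>.
\<close>

definition affine_form :: "nat \<Rightarrow> ((nat \<Rightarrow> real) \<Rightarrow> real) \<Rightarrow> bool" where
  "affine_form d f \<longleftrightarrow> (\<exists>c e. \<forall>y. f y = (\<Sum>j<d. c j * y j) + e)"

lemma affine_formI: "(\<And>y. f y = (\<Sum>j<d. c j * y j) + e) \<Longrightarrow> affine_form d f"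
  unfolding affine_form_def by blast

lemma affine_formE:
  assumes "affine_form d f"
  obtains c e where "\<And>y. f y = (\<Sum>j<d. c j * y j) + e"
  using assms unfolding affine_form_def by blast

lemma affine_form_const: "affine_form d (\<lambda>_. e)"
  by (rule affine_formI[where c = "\<lambda>_. 0"]) simp

lemma affine_form_coord: "j < d \<Longrightarrow> affine_form d (\<lambda>y. y j)"
  by (rule affine_formI[where c = "\<lambda>i. if i = j then 1 else 0" and e = 0])
    (simp add: if_distrib[of "\<lambda>a. a * _"] cong: if_cong)

lemma affine_form_add:
  assumes "affine_form d f" and "affine_form d g"
  shows "affine_form d (\<lambda>y. f y + g y)"
proof -
  obtain a e b e' where "\<And>y. f y = (\<Sum>j<d. a j * y j) + e"
    and "\<And>y. g y = (\<Sum>j<d. b j * y j) + e'"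
    using assms by (metis affine_formE)
  then show ?thesis
    by (intro affine_formI[where c = "\<lambda>j. a j + b j" and e = "e + e'"])
      (simp add: sum.distrib distrib_right)
qed

lemma affine_form_mult:
  assumes "affine_form d f"
  shows "affine_form d (\<lambda>y. a * f y)"
proof -
  obtain c e where "\<And>y. f y = (\<Sum>j<d. c j * y j) + e"
    using assms by (metis affine_formE)
  then show ?thesis
    by (intro affine_formI[where c = "\<lambda>j. a * c j" and e = "a * e"])
      (simp add: sum_distrib_left distrib_left mult.assoc)
qed

lemma affine_form_diff:
  "affine_form d f \<Longrightarrow> affine_form d g \<Longrightarrow> affine_form d (\<lambda>y. f y - g y)"
  using affine_form_add[of d f "\<lambda>y. (-1) * g y"] affine_form_mult[of d g "-1"] by simp

lemma affine_form_mono: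
  assumes "affine_form d f" and "d \<le> d'"
  shows "affine_form d' f"
proof -
  obtain c e where f: "\<And>y. f y = (\<Sum>j<d. c j * y j) + e"
    using assms(1) by (metis affine_formE)
  have "(\<Sum>j<d'. (if j < d then c j else 0) * y j) = (\<Sum>j<d. (if j < d then c j else 0) * y j)" for y
    using assms(2) by (intro sum.mono_neutral_right) auto
  then have "(\<Sum>j<d'. (if j < d then c j else 0) * y j) = (\<Sum>j<d. c j * y j)" for y
    by simp
  then show ?thesis
    using f by (intro affine_formI[where c = "\<lambda>j. if j < d then c j else 0" and e = e])
      simp
qed

lemma affine_form_shift:
  assumes "affine_form d f"
  shows "affine_form (s + d) (\<lambda>y. f (\<lambda>j. y (s + j)))"
proof -
  obtain c e where "\<And>y. f y = (\<Sum>j<d. c j * y j) + e"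
    using assms by (metis affine_formE)
  moreover have "(\<Sum>j<s + d. (if j < s then 0 else c (j - s)) * y j) = (\<Sum>j<d. c j * y (s + j))" for y
    by (induction d) simp_all
  ultimately show ?thesis
    by (intro affine_formI[where c = "\<lambda>j. if j < s then 0 else c (j - s)" and e = e])
      simp
qed

lemma affine_form_cong: "affine_form d f \<Longrightarrow> (\<And>j. j < d \<Longrightarrow> y j = z j) \<Longrightarrow> f y = f z"
  unfolding affine_form_def by auto

lemma affine_form_eval_lincomb:
  assumes "affine_form d f"
  shows "f (\<lambda>j. a * y j + b * z j) = a * f y + b * f z + (1 - a - b) * f (\<lambda>_. 0)"
proof -
  obtain c e where "\<And>y. f y = (\<Sum>j<d. c j * y j) + e"
    using assms by (metis affine_formE)
  then show ?thesis
    by (simp add: distrib_left sum.distrib sum_distrib_left algebra_simps)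
qed

lemma affine_form_eval_translate:
  "affine_form d f \<Longrightarrow> f (\<lambda>j. y j + s * v j) = f y + s * (f v - f (\<lambda>_. 0))"
  using affine_form_eval_lincomb[of d f 1 y s v] by (simp add: algebra_simps)

lemma affine_form_eval_scale:
  "affine_form d f \<Longrightarrow> f (\<lambda>j. s * y j) = s * f y + (1 - s) * f (\<lambda>_. 0)"
  using affine_form_eval_lincomb[of d f s y 0 y] by simp

text \<open>Balas' homogenization of an affine function by a weight \<open>l\<close>.\<close>

definition homog :: "((nat \<Rightarrow> real) \<Rightarrow> real) \<Rightarrow> (nat \<Rightarrow> real) \<Rightarrow> real \<Rightarrow> real" where
  "homog f y l = f y - f (\<lambda>_. 0) + f (\<lambda>_. 0) * l"

lemma homog_eq_scale:
  assumes "affine_form d f" and "l \<noteq> 0"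
  shows "homog f y l = l * f (\<lambda>j. y j / l)"
proof -
  have "f (\<lambda>j. y j / l) = f y / l + (1 - 1 / l) * f (\<lambda>_. 0)"
    using affine_form_eval_scale[OF assms(1), of "1 / l" y] by simp
  moreover have "a - z + z * l = l * F" if "F = a / l + (1 - 1 / l) * z" for F a z
    using that assms(2) by (simp add: field_simps)
  ultimately show ?thesis
    unfolding homog_def by blast
qed

definition affine_rep :: "nat \<Rightarrow> nat \<Rightarrow> (nat \<Rightarrow> (nat \<Rightarrow> real) \<Rightarrow> real) \<Rightarrow> ('n \<Rightarrow> (nat \<Rightarrow> real) \<Rightarrow> real) \<Rightarrow> bool" where
  "affine_rep d m g h \<longleftrightarrow> (\<forall>r<m. affine_form d (g r)) \<and> (\<forall>k. affine_form d (h k))"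

definition proj_set :: "nat \<Rightarrow> (nat \<Rightarrow> (nat \<Rightarrow> real) \<Rightarrow> real) \<Rightarrow> ('n \<Rightarrow> (nat \<Rightarrow> real) \<Rightarrow> real) \<Rightarrow> (real ^ 'n) set" where
  "proj_set m g h = (\<lambda>y. \<chi> k. h k y) ` {y. \<forall>r<m. 0 \<le> g r y}"

definition affine_ext_form :: "(real ^ 'n) set \<Rightarrow> nat \<Rightarrow> bool" where
  "affine_ext_form P m \<longleftrightarrow> (\<exists>d g h. affine_rep d m g h \<and> P = proj_set m g h)"

lemma has_ext_form_iff_affine_ext_form:
  fixes P :: "(real ^ 'n) set"
  shows "has_ext_form P m \<longleftrightarrow> affine_ext_form P m"
proof
  assume "has_ext_form P m"
  then obtain d A b T t where P: "P = {x. \<exists>y :: nat \<Rightarrow> real.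
      (\<forall>r<m. (\<Sum>j<d. A r j * y j) \<ge> b r) \<and> (\<forall>k. x $ k = (\<Sum>j<d. T k j * y j) + t $ k)}"
    unfolding has_ext_form_def by blast
  define g where "g r y = (\<Sum>j<d. A r j * y j) + - b r" for r y
  define h where "h k y = (\<Sum>j<d. T k j * y j) + t $ k" for k y
  have "affine_rep d m g h"
    unfolding affine_rep_def g_def h_def by (blast intro: affine_formI)
  moreover have "P = proj_set m g h"
    unfolding P proj_set_def g_def h_def by (auto simp: vec_eq_iff)
  ultimately show "affine_ext_form P m"
    unfolding affine_ext_form_def by blast
next
  assume "affine_ext_form P m"
  then obtain d g h where rep: "affine_rep d m g h" and P: "P = proj_set m g h"
    unfolding affine_ext_form_def by blast
  have "\<forall>r. \<exists>c e. r < m \<longrightarrow> (\<forall>y. g r y = (\<Sum>j<d. c j * y j) + e)"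
    using rep unfolding affine_rep_def affine_form_def by blast
  then obtain A e where A: "\<And>r y. r < m \<Longrightarrow> g r y = (\<Sum>j<d. A r j * y j) + e r"
    by metis
  have "\<forall>k. \<exists>c e. \<forall>y. h k y = (\<Sum>j<d. c j * y j) + e"
    using rep unfolding affine_rep_def affine_form_def by blast
  then obtain T t where T: "\<And>k y. h k y = (\<Sum>j<d. T k j * y j) + t k"
    by metis
  define b where "b r = - e r" for r
  define t' :: "real ^ 'n" where "t' = (\<chi> k. t k)"
  have "0 \<le> g r y \<longleftrightarrow> b r \<le> (\<Sum>j<d. A r j * y j)" if "r < m" for r y
    using A[OF that, of y] unfolding b_def by linarith
  moreover have "x = (\<chi> k. h k y) \<longleftrightarrow> (\<forall>k. x $ k = (\<Sum>j<d. T k j * y j) + t' $ k)" for x y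
    by (simp add: T t'_def vec_eq_iff)
  ultimately have "P = {x. \<exists>y :: nat \<Rightarrow> real. (\<forall>r<m. b r \<le> (\<Sum>j<d. A r j * y j))
      \<and> (\<forall>k. x $ k = (\<Sum>j<d. T k j * y j) + t' $ k)}"
    unfolding P proj_set_def image_def by auto
  then show "has_ext_form P m"
    unfolding has_ext_form_def by blast
qed

lemma all_less_add_iff:
  fixes m1 m2 :: nat
  shows "(\<forall>r < m1 + m2. P r) \<longleftrightarrow> (\<forall>r < m1. P r) \<and> (\<forall>r < m2. P (m1 + r))"
  (is "?L \<longleftrightarrow> ?R")
proof
  assume ?R
  show ?L
  proof (intro allI impI)
    fix r assume "r < m1 + m2"
    with \<open>?R\<close> show "P r"
      by (cases "r < m1") (auto dest: spec[of _ "r - m1"])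
  qed
qed auto

lemma affine_zero_set_retraction:
  assumes a: "affine_form d a" and "a y0 = 0"
  obtains \<sigma> where "\<And>f. affine_form d f \<Longrightarrow> affine_form d (f \<circ> \<sigma>)"
    and "\<And>y. a (\<sigma> y) = 0" and "\<And>y. a y = 0 \<Longrightarrow> \<sigma> y = y"
proof (cases "\<forall>y. a y = a (\<lambda>_. 0)")
  case True
  with \<open>a y0 = 0\<close> have "a y = 0" for y
    by metis
  then show ?thesis
    by (intro that[of id]) auto
next
  case False
  then obtain y1 where y1: "a y1 \<noteq> a (\<lambda>_. 0)"
    by blast
  define \<alpha> where "\<alpha> = a y1 - a (\<lambda>_. 0)"
  define v where "v = (\<lambda>j. y1 j / \<alpha>)"
  have "\<alpha> \<noteq> 0" and "a y1 = \<alpha> + a (\<lambda>_. 0)"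
    using y1 by (simp_all add: \<alpha>_def)
  have "a v = a y1 / \<alpha> + (1 - 1 / \<alpha>) * a (\<lambda>_. 0)"
    using affine_form_eval_scale[OF a, of "1 / \<alpha>" y1] by (simp add: v_def)
  also have "\<dots> = a (\<lambda>_. 0) + 1"
    using \<open>\<alpha> \<noteq> 0\<close> \<open>a y1 = \<alpha> + a (\<lambda>_. 0)\<close> by (simp add: field_simps)
  finally have slope: "a v - a (\<lambda>_. 0) = 1"
    by simp
  \<comment> \<open>moving along \<open>v\<close>, on which \<open>a\<close> has slope 1, retracts onto the zero set of \<open>a\<close>\<close>
  define \<sigma> where "\<sigma> y = (\<lambda>j. y j + (- a y) * v j)" for y
  show ?thesis
  proof (rule that)
    fix f assume f: "affine_form d f"
    have "(f \<circ> \<sigma>) y = f y + (f (\<lambda>_. 0) - f v) * a y" for y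
      using affine_form_eval_translate[OF f, of y "- a y" v] by (simp add: \<sigma>_def algebra_simps)
    then have "f \<circ> \<sigma> = (\<lambda>y. f y + (f (\<lambda>_. 0) - f v) * a y)"
      by blast
    then show "affine_form d (f \<circ> \<sigma>)"
      by (simp add: affine_form_add affine_form_mult a f)
  next
    show "a (\<sigma> y) = 0" for y
      using affine_form_eval_translate[OF a, of y "- a y" v] slope by (simp add: \<sigma>_def)
  next
    show "\<sigma> y = y" if "a y = 0" for y
      using that by (simp add: \<sigma>_def)
  qed
qed

lemma image_Collect_retract:
  assumes "\<And>y. a (\<sigma> y) = 0" and "\<And>y. a y = 0 \<Longrightarrow> \<sigma> y = y"
  shows "F ` {y. a y = 0 \<and> P y} = (\<lambda>y. F (\<sigma> y)) ` {y. P (\<sigma> y)}"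
proof
  show "F ` {y. a y = 0 \<and> P y} \<subseteq> (\<lambda>y. F (\<sigma> y)) ` {y. P (\<sigma> y)}"
    using assms(2) by (auto simp: image_iff) (metis)
  show "(\<lambda>y. F (\<sigma> y)) ` {y. P (\<sigma> y)} \<subseteq> F ` {y. a y = 0 \<and> P y}"
    using assms(1) by auto
qed

text \<open>
  Equations on the variables cost no rows: each is eliminated by composing with a retraction
  onto its zero set.
\<close>

lemma proj_set_eqs_elim:
  assumes "affine_rep d m g h" and "\<forall>e\<in>set E. affine_form d e" and "\<exists>y0. \<forall>e\<in>set E. e y0 = 0"
  shows "\<exists>g' h'. affine_rep d m g' h' \<and>
    (\<lambda>y. \<chi> k. h k y) ` {y. (\<forall>r<m. 0 \<le> g r y) \<and> (\<forall>e\<in>set E. e y = 0)} = proj_set m g' h'"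
  using assms
proof (induction "length E" arbitrary: E g h)
  case 0
  then show ?case
    unfolding proj_set_def by auto
next
  case (Suc n)
  then obtain a E' where E: "E = a # E'" and n: "n = length E'"
    by (cases E) auto
  obtain y0 where "a y0 = 0" and "\<forall>e\<in>set E'. e y0 = 0"
    using Suc.prems(3) E by auto
  moreover have a: "affine_form d a"
    using Suc.prems(2) E by simp
  ultimately obtain \<sigma> where \<sigma>: "\<And>f. affine_form d f \<Longrightarrow> affine_form d (f \<circ> \<sigma>)"
    and "\<And>y. a (\<sigma> y) = 0" and \<sigma>_id: "\<And>y. a y = 0 \<Longrightarrow> \<sigma> y = y"
    by (metis affine_zero_set_retraction)
  have "\<exists>g' h'. affine_rep d m g' h' \<and>
      (\<lambda>y. \<chi> k. (h k \<circ> \<sigma>) y) ` {y. (\<forall>r<m. 0 \<le> (g r \<circ> \<sigma>) y) \<and> (\<forall>e\<in>set (map (\<lambda>e. e \<circ> \<sigma>) E'). e y = 0)}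
        = proj_set m g' h'"
  proof (rule Suc.hyps)
    show "n = length (map (\<lambda>e. e \<circ> \<sigma>) E')"
      using n by simp
    show "affine_rep d m (\<lambda>r. g r \<circ> \<sigma>) (\<lambda>k. h k \<circ> \<sigma>)"
      using Suc.prems(1) \<sigma> by (simp add: affine_rep_def)
    show "\<forall>e\<in>set (map (\<lambda>e. e \<circ> \<sigma>) E'). affine_form d e"
      using Suc.prems(2) \<sigma> E by simp
    show "\<exists>y0. \<forall>e\<in>set (map (\<lambda>e. e \<circ> \<sigma>) E'). e y0 = 0"
      using \<open>\<forall>e\<in>set E'. e y0 = 0\<close> \<open>a y0 = 0\<close> \<sigma>_id by (intro exI[of _ y0]) simp
  qed
  moreover have "{y. (\<forall>r<m. 0 \<le> g r y) \<and> (\<forall>e\<in>set E. e y = 0)}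
      = {y. a y = 0 \<and> (\<forall>r<m. 0 \<le> g r y) \<and> (\<forall>e\<in>set E'. e y = 0)}"
    using E by auto
  ultimately show ?case
    using image_Collect_retract[of a \<sigma> "\<lambda>y. \<chi> k. h k y"] \<open>\<And>y. a (\<sigma> y) = 0\<close> \<sigma>_id by simp
qed

lemma affine_ext_form_coord_eq:
  fixes P :: "(real ^ 'n) set"
  assumes "affine_ext_form P m" and "\<exists>x\<in>P. x $ i = b"
  shows "affine_ext_form {x\<in>P. x $ i = b} m"
proof -
  obtain d g h where rep: "affine_rep d m g h" and P: "P = proj_set m g h"
    using assms(1) unfolding affine_ext_form_def by blast
  let ?E = "[\<lambda>y. h i y - b]"
  have "{x\<in>P. x $ i = b} = (\<lambda>y. \<chi> k. h k y) ` {y. (\<forall>r<m. 0 \<le> g r y) \<and> (\<forall>e\<in>set ?E. e y = 0)}"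
    unfolding P proj_set_def by auto
  moreover have "\<exists>g' h'. affine_rep d m g' h' \<and>
      (\<lambda>y. \<chi> k. h k y) ` {y. (\<forall>r<m. 0 \<le> g r y) \<and> (\<forall>e\<in>set ?E. e y = 0)} = proj_set m g' h'"
  proof (rule proj_set_eqs_elim[OF rep])
    show "\<forall>e\<in>set ?E. affine_form d e"
      using rep by (simp add: affine_rep_def affine_form_diff affine_form_const)
    show "\<exists>y0. \<forall>e\<in>set ?E. e y0 = 0"
      using assms(2) unfolding P proj_set_def by auto
  qed
  ultimately show ?thesis
    unfolding affine_ext_form_def by auto
qed

definition join :: "nat \<Rightarrow> (nat \<Rightarrow> real) \<Rightarrow> (nat \<Rightarrow> real) \<Rightarrow> nat \<Rightarrow> real" where
  "join d y z j = (if j < d then y j else z (j - d))"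

lemma join_add [simp]: "join d y z (d + j) = z j"
  by (simp add: join_def)

lemma affine_form_join: "affine_form d f \<Longrightarrow> f (join d y z) = f y"
  by (erule affine_form_cong) (simp add: join_def)

lemma affine_form_shift_mono:
  "affine_form d2 f \<Longrightarrow> d1 + d2 \<le> D \<Longrightarrow> affine_form D (\<lambda>y. f (\<lambda>j. y (d1 + j)))"
  by (rule affine_form_mono[OF affine_form_shift])

lemma affine_ext_form_Int:
  fixes P1 P2 :: "(real ^ 'n::finite) set"
  assumes "affine_ext_form P1 m1" and "affine_ext_form P2 m2" and "P1 \<inter> P2 \<noteq> {}"
  shows "affine_ext_form (P1 \<inter> P2) (m1 + m2)"
proof -
  obtain d1 g1 h1 where rep1: "affine_rep d1 m1 g1 h1" and P1: "P1 = proj_set m1 g1 h1"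
    using assms(1) unfolding affine_ext_form_def by blast
  obtain d2 g2 h2 where rep2: "affine_rep d2 m2 g2 h2" and P2: "P2 = proj_set m2 g2 h2"
    using assms(2) unfolding affine_ext_form_def by blast
  obtain ks :: "'n list" where ks: "set ks = UNIV"
    using finite_list[of "UNIV :: 'n set"] by auto
  define g where "g r y = (if r < m1 then g1 r y else g2 (r - m1) (\<lambda>j. y (d1 + j)))" for r y
  define E where "E = map (\<lambda>k y. h1 k y - h2 k (\<lambda>j. y (d1 + j))) ks"
  have lift1: "affine_form (d1 + d2) f" if "affine_form d1 f" for f
    using that by (rule affine_form_mono) simp
  have lift2: "affine_form (d1 + d2) (\<lambda>y. f (\<lambda>j. y (d1 + j)))" if "affine_form d2 f" for f
    using that by (rule affine_form_shift_mono) simp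
  have rep: "affine_rep (d1 + d2) (m1 + m2) g h1"
    unfolding affine_rep_def
  proof (intro conjI allI impI)
    fix r assume "r < m1 + m2"
    then show "affine_form (d1 + d2) (g r)"
      using rep1 rep2 lift1[of "g1 r"] lift2[of "g2 (r - m1)"] unfolding g_def affine_rep_def
      by (cases "r < m1") auto
  next
    show "affine_form (d1 + d2) (h1 k)" for k
      using rep1 lift1 by (simp add: affine_rep_def)
  qed
  have E_affine: "\<forall>e\<in>set E. affine_form (d1 + d2) e"
    using rep1 rep2 lift1 lift2 unfolding affine_rep_def E_def by (auto intro: affine_form_diff)
  have feasible_iff: "(\<forall>r<m1 + m2. 0 \<le> g r y)
      \<longleftrightarrow> (\<forall>r<m1. 0 \<le> g1 r y) \<and> (\<forall>r<m2. 0 \<le> g2 r (\<lambda>j. y (d1 + j)))" for y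
    by (simp add: all_less_add_iff g_def)
  have eqs_iff: "(\<forall>e\<in>set E. e y = 0) \<longleftrightarrow> (\<forall>k. h1 k y = h2 k (\<lambda>j. y (d1 + j)))" for y
    using ks by (auto simp: E_def)
  have "P1 \<inter> P2 = (\<lambda>y. \<chi> k. h1 k y) ` {y. (\<forall>r<m1 + m2. 0 \<le> g r y) \<and> (\<forall>e\<in>set E. e y = 0)}"
  proof (intro equalityI subsetI)
    fix x assume "x \<in> P1 \<inter> P2"
    then obtain y1 y2 where y1: "\<forall>r<m1. 0 \<le> g1 r y1" "x = (\<chi> k. h1 k y1)"
      and y2: "\<forall>r<m2. 0 \<le> g2 r y2" "x = (\<chi> k. h2 k y2)"
      unfolding P1 P2 proj_set_def by auto
    have "g1 r (join d1 y1 y2) = g1 r y1" if "r < m1" for r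
      using rep1 that by (simp add: affine_rep_def affine_form_join)
    moreover have "h1 k (join d1 y1 y2) = h1 k y1" for k
      using rep1 by (simp add: affine_rep_def affine_form_join)
    ultimately show "x \<in> (\<lambda>y. \<chi> k. h1 k y) ` {y. (\<forall>r<m1 + m2. 0 \<le> g r y) \<and> (\<forall>e\<in>set E. e y = 0)}"
      using y1 y2 by (intro image_eqI[where x = "join d1 y1 y2"]) (auto simp: feasible_iff eqs_iff vec_eq_iff)
  next
    fix x assume "x \<in> (\<lambda>y. \<chi> k. h1 k y) ` {y. (\<forall>r<m1 + m2. 0 \<le> g r y) \<and> (\<forall>e\<in>set E. e y = 0)}"
    then obtain y where feasible1: "\<forall>r<m1. 0 \<le> g1 r y"
      and feasible2: "\<forall>r<m2. 0 \<le> g2 r (\<lambda>j. y (d1 + j))"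
      and "\<forall>k. h1 k y = h2 k (\<lambda>j. y (d1 + j))" and x: "x = (\<chi> k. h1 k y)"
      by (auto simp: feasible_iff eqs_iff)
    then have "x = (\<chi> k. h2 k (\<lambda>j. y (d1 + j)))"
      by simp
    then show "x \<in> P1 \<inter> P2"
      using feasible1 feasible2 x unfolding P1 P2 proj_set_def by blast
  qed
  moreover have "\<exists>g' h'. affine_rep (d1 + d2) (m1 + m2) g' h' \<and>
      (\<lambda>y. \<chi> k. h1 k y) ` {y. (\<forall>r<m1 + m2. 0 \<le> g r y) \<and> (\<forall>e\<in>set E. e y = 0)} = proj_set (m1 + m2) g' h'"
  proof (rule proj_set_eqs_elim[OF rep E_affine])
    show "\<exists>y0. \<forall>e\<in>set E. e y0 = 0"
      using assms(3) calculation by auto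
  qed
  ultimately show ?thesis
    unfolding affine_ext_form_def by auto
qed

lemma convex_proj_set:
  fixes h :: "'n::finite \<Rightarrow> (nat \<Rightarrow> real) \<Rightarrow> real"
  assumes "affine_rep d m g h"
  shows "convex (proj_set m g h)"
proof (rule convexI)
  fix x x' :: "real ^ 'n" and u v :: real
  assume "x \<in> proj_set m g h" "x' \<in> proj_set m g h" and "0 \<le> u" "0 \<le> v" "u + v = 1"
  then obtain y y' where y: "\<forall>r<m. 0 \<le> g r y" "x = (\<chi> k. h k y)"
    and y': "\<forall>r<m. 0 \<le> g r y'" "x' = (\<chi> k. h k y')"
    unfolding proj_set_def by auto
  define z where "z = (\<lambda>j. u * y j + v * y' j)"
  have eval: "f z = u * f y + v * f y'" if "affine_form d f" for f
    using affine_form_eval_lincomb[OF that, of u y v y'] \<open>u + v = 1\<close> by (simp add: z_def)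
  have "\<forall>r<m. 0 \<le> g r z"
    using assms y(1) y'(1) \<open>0 \<le> u\<close> \<open>0 \<le> v\<close> by (simp add: affine_rep_def eval)
  moreover have "u *\<^sub>R x + v *\<^sub>R x' = (\<chi> k. h k z)"
    using assms y(2) y'(2) by (simp add: affine_rep_def eval vec_eq_iff)
  ultimately show "u *\<^sub>R x + v *\<^sub>R x' \<in> proj_set m g h"
    unfolding proj_set_def by blast
qed

lemma bounded_ray_imp_zero:
  fixes a b B :: real
  assumes "\<And>s. 0 \<le> s \<Longrightarrow> \<bar>a + s * b\<bar> \<le> B"
  shows "b = 0"
proof (rule ccontr)
  assume "b \<noteq> 0"
  define s where "s = (B + \<bar>a\<bar> + 1) / \<bar>b\<bar>"
  have "0 \<le> B"
    using assms[of 0] by simp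
  then have "0 \<le> s"
    by (simp add: s_def)
  have "\<bar>s * b\<bar> = B + \<bar>a\<bar> + 1"
    using \<open>b \<noteq> 0\<close> \<open>0 \<le> B\<close> by (simp add: s_def abs_mult)
  then have "B + 1 \<le> \<bar>a + s * b\<bar>"
    by linarith
  with assms[OF \<open>0 \<le> s\<close>] show False
    by linarith
qed

lemma proj_set_recession:
  fixes h :: "'n::finite \<Rightarrow> (nat \<Rightarrow> real) \<Rightarrow> real"
  assumes rep: "affine_rep d m g h" and "proj_set m g h \<noteq> {}" and "bounded (proj_set m g h)"
    and v: "\<forall>r<m. 0 \<le> homog (g r) v 0"
  shows "homog (h k) v 0 = 0"
proof -
  obtain y0 where y0: "\<forall>r<m. 0 \<le> g r y0"
    using assms(2) unfolding proj_set_def by auto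
  obtain B where B: "\<forall>x\<in>proj_set m g h. norm x \<le> B"
    using assms(3) unfolding bounded_iff by blast
  have "\<bar>h k y0 + s * homog (h k) v 0\<bar> \<le> B" if "0 \<le> s" for s
  proof -
    let ?y = "\<lambda>j. y0 j + s * v j"
    have translate: "f ?y = f y0 + s * homog f v 0" if "affine_form d f" for f
      using affine_form_eval_translate[OF that] by (simp add: homog_def)
    have "\<forall>r<m. 0 \<le> g r ?y"
      using rep y0 v \<open>0 \<le> s\<close> by (simp add: affine_rep_def translate)
    then have "(\<chi> k. h k ?y) \<in> proj_set m g h"
      unfolding proj_set_def by blast
    then have "\<bar>h k ?y\<bar> \<le> B"
      using B component_le_norm_cart[of "\<chi> k. h k ?y" k] by force
    then show ?thesis
      using rep by (simp add: affine_rep_def translate)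
  qed
  then show ?thesis
    by (rule bounded_ray_imp_zero)
qed

lemma proj_set_homog_nonneg:
  fixes h :: "'n::finite \<Rightarrow> (nat \<Rightarrow> real) \<Rightarrow> real"
  assumes rep: "affine_rep d m g h" and ne: "proj_set m g h \<noteq> {}" and bd: "bounded (proj_set m g h)"
    and not_singleton: "\<nexists>p. proj_set m g h = {p}" and feasible: "\<forall>r<m. 0 \<le> homog (g r) y l"
  shows "0 \<le> l"
proof (rule ccontr)
  assume "\<not> 0 \<le> l"
  define w where "w = (\<lambda>j. y j / l)"
  have "g r w \<le> 0" if "r < m" for r
  proof -
    have "0 \<le> homog (g r) y l"
      using feasible that by blast
    also have "\<dots> = l * g r w"
      unfolding w_def using rep that \<open>\<not> 0 \<le> l\<close> by (intro homog_eq_scale) (auto simp: affine_rep_def)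
    finally have "0 \<le> l * g r w" .
    with \<open>\<not> 0 \<le> l\<close> show ?thesis
      by (simp add: zero_le_mult_iff)
  qed
  \<comment> \<open>every point of the set then differs from \<open>\<chi> k. h k w\<close> by a recession direction\<close>
  have "x = (\<chi> k. h k w)" if x_mem: "x \<in> proj_set m g h" for x
  proof -
    obtain y0 where y0: "\<forall>r<m. 0 \<le> g r y0" and x: "x = (\<chi> k. h k y0)"
      using x_mem unfolding proj_set_def by auto
    have diff: "homog f (\<lambda>j. y0 j - w j) 0 = f y0 - f w" if "affine_form d f" for f
      using affine_form_eval_lincomb[OF that, of 1 y0 "-1" w] by (simp add: homog_def)
    have "\<forall>r<m. 0 \<le> homog (g r) (\<lambda>j. y0 j - w j) 0"
      using rep y0 \<open>\<And>r. r < m \<Longrightarrow> g r w \<le> 0\<close> by (simp add: affine_rep_def diff) (meson order.trans)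
    then have "homog (h k) (\<lambda>j. y0 j - w j) 0 = 0" for k
      by (rule proj_set_recession[OF rep ne bd])
    then show ?thesis
      using rep x by (simp add: affine_rep_def diff vec_eq_iff)
  qed
  with ne not_singleton show False
    by blast
qed

text \<open>Under these conditions Balas' formulation of a union is exact.\<close>

definition homog_admissible :: "nat \<Rightarrow> (nat \<Rightarrow> (nat \<Rightarrow> real) \<Rightarrow> real) \<Rightarrow> ('n \<Rightarrow> (nat \<Rightarrow> real) \<Rightarrow> real) \<Rightarrow> bool" where
  "homog_admissible m g h \<longleftrightarrow>
     (\<forall>y l. (\<forall>r<m. 0 \<le> homog (g r) y l) \<longrightarrow> 0 \<le> l) \<and>
     (\<forall>y. (\<forall>r<m. 0 \<le> homog (g r) y 0) \<longrightarrow> (\<forall>k. homog (h k) y 0 = 0))"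

lemma affine_ext_form_admissible:
  fixes P :: "(real ^ 'n::finite) set"
  assumes "affine_ext_form P m" and "P \<noteq> {}" and "bounded P" and "1 \<le> m"
  obtains d g h where "affine_rep d m g h" and "homog_admissible m g h" and "P = proj_set m g h"
proof (cases "\<exists>p. P = {p}")
  case True
  then obtain p where "P = {p}"
    by blast
  \<comment> \<open>a point is cut out by the rows \<open>1 \<ge> 0\<close>, whose homogenization \<open>l \<ge> 0\<close> needs \<open>m \<ge> 1\<close>\<close>
  have "affine_rep 0 m (\<lambda>_ _. 1) (\<lambda>k _. p $ k)"
    by (simp add: affine_rep_def affine_form_const)
  moreover have "(\<forall>r<m. Q) \<longleftrightarrow> Q" for Q
    using \<open>1 \<le> m\<close> less_le_trans[OF zero_less_one] by blast
  then have "homog_admissible m (\<lambda>_ _. 1) (\<lambda>k _. p $ k)"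
    by (simp add: homog_admissible_def homog_def)
  moreover have "P = proj_set m (\<lambda>_ _. 1) (\<lambda>k _. p $ k)"
    using \<open>P = {p}\<close> by (auto simp: proj_set_def)
  ultimately show ?thesis
    by (rule that)
next
  case False
  obtain d g h where rep: "affine_rep d m g h" and P: "P = proj_set m g h"
    using assms(1) unfolding affine_ext_form_def by blast
  have "homog_admissible m g h"
    unfolding homog_admissible_def
    using proj_set_homog_nonneg[OF rep] proj_set_recession[OF rep] assms(2,3) False P by blast
  with rep P show ?thesis
    by (intro that)
qed

lemma homog_feasible_scaled:
  fixes h :: "'n::finite \<Rightarrow> (nat \<Rightarrow> real) \<Rightarrow> real"
  assumes rep: "affine_rep d m g h" and adm: "homog_admissible m g h" and ne: "proj_set m g h \<noteq> {}"
    and feasible: "\<forall>r<m. 0 \<le> homog (g r) y l"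
  shows "0 \<le> l" and "\<exists>p \<in> proj_set m g h. (\<chi> k. homog (h k) y l) = l *\<^sub>R p"
proof -
  show "0 \<le> l"
    using adm feasible unfolding homog_admissible_def by blast
  show "\<exists>p \<in> proj_set m g h. (\<chi> k. homog (h k) y l) = l *\<^sub>R p"
  proof (cases "l = 0")
    case True
    then have "homog (h k) y l = 0" for k
      using adm feasible unfolding homog_admissible_def by blast
    with ne True show ?thesis
      by (auto simp: vec_eq_iff)
  next
    case False
    define w where "w = (\<lambda>j. y j / l)"
    have scale: "homog f y l = l * f w" if "affine_form d f" for f
      unfolding w_def using that False by (rule homog_eq_scale)
    have "\<forall>r<m. 0 \<le> g r w"
      using rep feasible \<open>0 \<le> l\<close> False by (auto simp: affine_rep_def scale zero_le_mult_iff)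
    moreover have "(\<chi> k. homog (h k) y l) = l *\<^sub>R (\<chi> k. h k w)"
      using rep by (simp add: affine_rep_def scale vec_eq_iff)
    ultimately show ?thesis
      unfolding proj_set_def by blast
  qed
qed

lemma affine_form_homog:
  "affine_form D (\<lambda>y. f (\<sigma> y)) \<Longrightarrow> affine_form D l \<Longrightarrow> affine_form D (\<lambda>y. homog f (\<sigma> y) (l y))"
  unfolding homog_def by (intro affine_form_add affine_form_diff affine_form_mult affine_form_const)

lemma affine_ext_form_convex_hull_Un:
  fixes P1 P2 :: "(real ^ 'n::finite) set"
  assumes rep1: "affine_rep d1 m1 g1 h1" and adm1: "homog_admissible m1 g1 h1"
    and P1: "P1 = proj_set m1 g1 h1" and "P1 \<noteq> {}"
  assumes rep2: "affine_rep d2 m2 g2 h2" and adm2: "homog_admissible m2 g2 h2"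
    and P2: "P2 = proj_set m2 g2 h2" and "P2 \<noteq> {}"
  shows "affine_ext_form (convex hull (P1 \<union> P2)) (m1 + m2)"
proof -
  \<comment> \<open>Balas' formulation: the variables are a copy \<open>y1\<close> for \<open>P1\<close>, a copy \<open>y2\<close> for \<open>P2\<close> (from \<open>d1\<close> on) and the weight \<open>l\<close> (at \<open>L\<close>)\<close>
  define L where "L = d1 + d2"
  define g where "g r y = (if r < m1 then homog (g1 r) y (y L)
      else homog (g2 (r - m1)) (\<lambda>j. y (d1 + j)) (1 - y L))" for r y
  define h where "h k y = homog (h1 k) y (y L) + homog (h2 k) (\<lambda>j. y (d1 + j)) (1 - y L)" for k y
  have lift1: "affine_form (L + 1) f" if "affine_form d1 f" for f
    using that by (rule affine_form_mono) (simp add: L_def)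
  have lift2: "affine_form (L + 1) (\<lambda>y. f (\<lambda>j. y (d1 + j)))" if "affine_form d2 f" for f
    using that by (rule affine_form_shift_mono) (simp add: L_def)
  have weight: "affine_form (L + 1) (\<lambda>y. y L)" "affine_form (L + 1) (\<lambda>y. 1 - y L)"
    by (simp_all add: affine_form_coord affine_form_diff affine_form_const)
  have rep: "affine_rep (L + 1) (m1 + m2) g h"
    unfolding affine_rep_def
  proof (intro conjI allI impI)
    fix r assume "r < m1 + m2"
    then show "affine_form (L + 1) (g r)"
      using rep1 rep2 lift1[of "g1 r"] lift2[of "g2 (r - m1)"] weight
        affine_form_homog[of "L + 1" "g1 r" "\<lambda>y. y"] affine_form_homog[of "L + 1" "g2 (r - m1)"]
      unfolding g_def affine_rep_def by (cases "r < m1") auto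
  next
    show "affine_form (L + 1) (h k)" for k
      using rep1 rep2 lift1[of "h1 k"] lift2[of "h2 k"] weight
        affine_form_homog[of "L + 1" "h1 k" "\<lambda>y. y"] affine_form_homog[of "L + 1" "h2 k"]
      unfolding h_def affine_rep_def by (intro affine_form_add) auto
  qed
  have weight_join: "join d1 y1 (join d2 y2 (\<lambda>_. l)) L = l" for y1 y2 l
    by (simp add: L_def join_def)
  have g_join: "g r (join d1 y1 (join d2 y2 (\<lambda>_. l)))
      = (if r < m1 then homog (g1 r) y1 l else homog (g2 (r - m1)) y2 (1 - l))"
    if "r < m1 + m2" for r y1 y2 l
    using rep1 rep2 that weight_join by (auto simp: g_def homog_def affine_rep_def affine_form_join)
  have h_join: "h k (join d1 y1 (join d2 y2 (\<lambda>_. l))) = homog (h1 k) y1 l + homog (h2 k) y2 (1 - l)"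
    for k y1 y2 l
    using rep1 rep2 weight_join by (simp add: h_def homog_def affine_rep_def affine_form_join)
  have S_iff: "x \<in> proj_set (m1 + m2) g h \<longleftrightarrow> (\<exists>y1 y2 l. (\<forall>r<m1. 0 \<le> homog (g1 r) y1 l)
      \<and> (\<forall>r<m2. 0 \<le> homog (g2 r) y2 (1 - l)) \<and> x = (\<chi> k. homog (h1 k) y1 l + homog (h2 k) y2 (1 - l)))"
    for x
  proof
    assume "x \<in> proj_set (m1 + m2) g h"
    then obtain y where "\<forall>r<m1 + m2. 0 \<le> g r y" and "x = (\<chi> k. h k y)"
      unfolding proj_set_def by blast
    then show "\<exists>y1 y2 l. (\<forall>r<m1. 0 \<le> homog (g1 r) y1 l)
      \<and> (\<forall>r<m2. 0 \<le> homog (g2 r) y2 (1 - l)) \<and> x = (\<chi> k. homog (h1 k) y1 l + homog (h2 k) y2 (1 - l))"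
      by (intro exI[of _ y] exI[of _ "\<lambda>j. y (d1 + j)"] exI[of _ "y L"])
        (simp add: all_less_add_iff g_def h_def)
  next
    assume "\<exists>y1 y2 l. (\<forall>r<m1. 0 \<le> homog (g1 r) y1 l)
      \<and> (\<forall>r<m2. 0 \<le> homog (g2 r) y2 (1 - l)) \<and> x = (\<chi> k. homog (h1 k) y1 l + homog (h2 k) y2 (1 - l))"
    then obtain y1 y2 l where "\<forall>r<m1. 0 \<le> homog (g1 r) y1 l" "\<forall>r<m2. 0 \<le> homog (g2 r) y2 (1 - l)"
      and "x = (\<chi> k. homog (h1 k) y1 l + homog (h2 k) y2 (1 - l))"
      by blast
    then have "\<forall>r<m1 + m2. 0 \<le> g r (join d1 y1 (join d2 y2 (\<lambda>_. l)))"
      and "x = (\<chi> k. h k (join d1 y1 (join d2 y2 (\<lambda>_. l))))"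
      by (simp_all add: all_less_add_iff g_join h_join)
    then show "x \<in> proj_set (m1 + m2) g h"
      unfolding proj_set_def by blast
  qed
  have "convex hull (P1 \<union> P2) = proj_set (m1 + m2) g h"
  proof
    have "P1 \<subseteq> proj_set (m1 + m2) g h"
    proof
      fix x assume "x \<in> P1"
      then obtain y1 where "\<forall>r<m1. 0 \<le> g1 r y1" "x = (\<chi> k. h1 k y1)"
        unfolding P1 proj_set_def by blast
      then show "x \<in> proj_set (m1 + m2) g h"
        unfolding S_iff by (intro exI[of _ y1] exI[of _ "\<lambda>_. 0"] exI[of _ 1]) (simp add: homog_def)
    qed
    moreover have "P2 \<subseteq> proj_set (m1 + m2) g h"
    proof
      fix x assume "x \<in> P2"
      then obtain y2 where "\<forall>r<m2. 0 \<le> g2 r y2" "x = (\<chi> k. h2 k y2)"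
        unfolding P2 proj_set_def by blast
      then show "x \<in> proj_set (m1 + m2) g h"
        unfolding S_iff by (intro exI[of _ "\<lambda>_. 0"] exI[of _ y2] exI[of _ 0]) (simp add: homog_def)
    qed
    ultimately show "convex hull (P1 \<union> P2) \<subseteq> proj_set (m1 + m2) g h"
      using convex_proj_set[OF rep] by (simp add: hull_minimal)
  next
    show "proj_set (m1 + m2) g h \<subseteq> convex hull (P1 \<union> P2)"
    proof
      fix x assume "x \<in> proj_set (m1 + m2) g h"
      then obtain y1 y2 l where feasible1: "\<forall>r<m1. 0 \<le> homog (g1 r) y1 l"
        and feasible2: "\<forall>r<m2. 0 \<le> homog (g2 r) y2 (1 - l)"
        and x: "x = (\<chi> k. homog (h1 k) y1 l + homog (h2 k) y2 (1 - l))"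
        unfolding S_iff by blast
      obtain p1 where "p1 \<in> P1" and p1: "(\<chi> k. homog (h1 k) y1 l) = l *\<^sub>R p1"
        using homog_feasible_scaled(2)[OF rep1 adm1 _ feasible1] \<open>P1 \<noteq> {}\<close> P1 by blast
      obtain p2 where "p2 \<in> P2" and p2: "(\<chi> k. homog (h2 k) y2 (1 - l)) = (1 - l) *\<^sub>R p2"
        using homog_feasible_scaled(2)[OF rep2 adm2 _ feasible2] \<open>P2 \<noteq> {}\<close> P2 by blast
      have "x = l *\<^sub>R p1 + (1 - l) *\<^sub>R p2"
        using p1 p2 unfolding x by (simp add: vec_eq_iff)
      moreover have "0 \<le> l" "0 \<le> 1 - l"
        using homog_feasible_scaled(1)[OF rep1 adm1 _ feasible1] homog_feasible_scaled(1)[OF rep2 adm2 _ feasible2]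
          \<open>P1 \<noteq> {}\<close> \<open>P2 \<noteq> {}\<close> P1 P2 by auto
      ultimately show "x \<in> convex hull (P1 \<union> P2)"
        using \<open>p1 \<in> P1\<close> \<open>p2 \<in> P2\<close>
        by (simp add: convexD hull_inc)
    qed
  qed
  with rep show ?thesis
    unfolding affine_ext_form_def by blast
qed


lemma affine_ext_form_zero_rows:
  fixes P :: "(real ^ 'n::finite) set"
  assumes "affine_ext_form P 0" and "P \<noteq> {}" and "bounded P"
  shows "\<exists>p. P = {p}"
proof -
  obtain d g h where rep: "affine_rep d 0 g h" and P: "P = proj_set 0 g h"
    using assms(1) unfolding affine_ext_form_def by blast
  have "homog (h k) y 0 = 0" for k y
    using proj_set_recession[OF rep] assms(2,3) P by simp
  then have "P = {\<chi> k. h k (\<lambda>_. 0)}"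
    unfolding P proj_set_def by (auto simp: homog_def vec_eq_iff)
  then show ?thesis
    by blast
qed

lemma affine_ext_form_mapply:
  fixes Q :: "(real ^ 'n::finite) set"
  assumes "convex Q" and "bounded Q" and "vec 1 \<in> Q" and "affine_ext_form Q \<sigma>" and "1 \<le> \<sigma>"
  shows "affine_ext_form (mapply f Q) (msize f * \<sigma>)"
proof (induction f)
  case (MVar i)
  have "affine_ext_form {x\<in>Q. x $ i = 1} \<sigma>"
    using assms(3) by (intro affine_ext_form_coord_eq[OF assms(4)] bexI[of _ "vec 1"]) auto
  then show ?case
    by simp
next
  case (MAnd f g)
  have "mapply f Q \<inter> mapply g Q \<noteq> {}"
    using vec_1_mem_mapply[OF assms(3)] by blast
  with MAnd.IH show ?case
    by (simp add: affine_ext_form_Int distrib_right)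
next
  case (MOr f g)
  have ne: "mapply f' Q \<noteq> {}" for f'
    using vec_1_mem_mapply[OF assms(3)] by blast
  have bd: "bounded (mapply f' Q)" for f'
    using assms(2) mapply_subset[OF assms(1)] by (rule bounded_subset)
  have rows: "1 \<le> msize f' * \<sigma>" for f'
    using msize_ge_1[of f'] assms(5) by simp
  obtain d1 g1 h1 where rep1: "affine_rep d1 (msize f * \<sigma>) g1 h1"
    and adm1: "homog_admissible (msize f * \<sigma>) g1 h1" and P1: "mapply f Q = proj_set (msize f * \<sigma>) g1 h1"
    using affine_ext_form_admissible[OF MOr.IH(1) ne bd rows] by blast
  obtain d2 g2 h2 where rep2: "affine_rep d2 (msize g * \<sigma>) g2 h2"
    and adm2: "homog_admissible (msize g * \<sigma>) g2 h2" and P2: "mapply g Q = proj_set (msize g * \<sigma>) g2 h2"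
    using affine_ext_form_admissible[OF MOr.IH(2) ne bd rows] by blast
  show ?case
    using affine_ext_form_convex_hull_Un[OF rep1 adm1 P1 ne rep2 adm2 P2 ne] by (simp add: distrib_right)
qed

lemma has_ext_form_mapply:
  fixes Q :: "(real ^ 'n::finite) set"
  assumes "convex Q" and "bounded Q" and "vec 1 \<in> Q" and "has_ext_form Q \<sigma>"
  shows "has_ext_form (mapply \<phi> Q) (msize \<phi> * \<sigma>)"
proof (cases "\<sigma> = 0")
  case True
  then have "Q = {vec 1}"
    using affine_ext_form_zero_rows assms(2-4) by (force simp: has_ext_form_iff_affine_ext_form)
  then have "mapply \<phi> Q = Q"
    using mapply_subset[OF assms(1)] vec_1_mem_mapply[OF assms(3)] by blast
  with assms(4) True show ?thesis
    by simp
next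
  case False
  then show ?thesis
    using affine_ext_form_mapply[OF assms(1-3)] assms(4) by (simp add: has_ext_form_iff_affine_ext_form)
qed

theorem theorem4p3:
  fixes \<phi> :: "'n::finite mformula" and Q :: "(real ^ 'n) set" and p :: nat
  assumes "convex Q"
    and "\<forall>x\<in>Q. \<forall>i. 0 \<le> x $ i \<and> x $ i \<le> 1"
    and "defined_set \<phi> \<subseteq> Q"
  shows "((\<forall>c \<delta>. (\<forall>i. c i \<ge> 0) \<longrightarrow> \<delta> \<ge> 0 \<longrightarrow> satisfies_ineq (defined_set \<phi>) c \<delta>
              \<longrightarrow> pitch c \<delta> \<le> p \<longrightarrow> satisfies_ineq Q c \<delta>)
          \<longrightarrow> (\<forall>c \<delta>. (\<forall>i. c i \<ge> 0) \<longrightarrow> \<delta> \<ge> 0 \<longrightarrow> satisfies_ineq (defined_set \<phi>) c \<delta>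
              \<longrightarrow> pitch c \<delta> \<le> p + 1 \<longrightarrow> satisfies_ineq (mapply \<phi> Q) c \<delta>))
       \<and> (\<forall>\<sigma>. polytope Q \<and> has_ext_form Q \<sigma>
              \<longrightarrow> polytope (mapply \<phi> Q) \<and> has_ext_form (mapply \<phi> Q) (msize \<phi> * \<sigma>))"
proof -
  have "satisfies_valid_ineqs (defined_set \<phi>) Q p
      \<longrightarrow> satisfies_valid_ineqs (defined_set \<phi>) (mapply \<phi> Q) (p + 1)"
    using satisfies_valid_ineqs_mapply assms(1,2) by blast
  moreover have "vec 1 \<in> Q"
    using assms(3) vec_1_mem_defined_set by blast
  ultimately show ?thesis
    unfolding satisfies_valid_ineqs_def
    using polytope_mapply has_ext_form_mapply[OF assms(1)] polytope_imp_bounded by blast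
qed

end
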